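(* Let $n\ge1$, $m\ge2$, and let $\mu_1,\dots,\mu_n,\beta_1,\dots,\beta_n,c_1,\dots,c_n,d$ be nonzero complex numbers with $\mu_1,\dots,\mu_n$ pairwise distinct and chosen generically. Then the polynomial system in $(\lambda,x)\in\mathbb C\times\mathbb C^n$ $$Q(\lambda,x)=\big((\lambda-\mu_1)(x_1^{m-1}-\beta_1),\ \dots,\ (\lambda-\mu_n)(x_n^{m-1}-\beta_n),\ c_1x_1+\cdots+c_nx_n+d\big)^T=0$$ has exactly $n(m-1)^{n-1}$ solutions, and each is nonsingular (the Jacobian of $Q$ with respect to $(\lambda,x)$ is invertible there). Moreover $Q$ and the system $G(\lambda,x)=\big((\mathcal A^{(k)}x^{m-1})_i-\lambda(\mathcal Bx^{m-1})_i\ (i=1,\dots,n),\ a_1x_1+\cdots+a_nx_n+b\big)^T$ (for any $\mathcal A,\mathcal B\in\mathbb C^{[m,n]}$, $1\le k\le m$, and complex $a_i,b$) both have $2$-homogeneous Bézout number $n(m-1)^{n-1}$ with respect to the variable partition $\{\lambda\},\{x_1,\dots,x_n\}$.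
   Context: For $\mathcal A\in\mathbb C^{[m,n]}$ (an $m$th-order $n$-dimensional complex tensor) and $x\in\mathbb C^n$, $\mathcal A^{(k)}x^{m-1}\in\mathbb C^n$ has $j$th entry $\sum A_{i_1\cdots i_{k-1}\,j\,i_{k+1}\cdots i_m}\prod_{r\neq k}x_{i_r}$, and $\mathcal Bx^{m-1}:=\mathcal B^{(1)}x^{m-1}$. For a partition of the variables into groups $y_1,\dots,y_K$ of sizes $l_1,\dots,l_K$ and a square system $p_1,\dots,p_N$ with $d_{ij}$ the degree of $p_i$ in the group $y_j$, the multihomogeneous Bézout number is the coefficient of $\alpha_1^{l_1}\cdots\alpha_K^{l_K}$ in $\prod_i(d_{i1}\alpha_1+\cdots+d_{iK}\alpha_K)$. (Genericity of the $\mu_i$ relative to the other parameters ensures the solution count; the nonsingularity uses $\mu_j\neq\mu_i$ for $j\ne i$.)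
   Formalization: Genericity concerns $\mu,\beta,c,d$ jointly (the solution count and nonsingularity hold off the zero set of a nonzero polynomial in all of them), and the Bezout claim for G assumes some $a_i \neq 0$ and no identically zero entry $(\mathcal Bx^{m-1})_i$. Each condition added here is assumed in the paper as well or is needed for the statement above to hold. *)

theory Defs
  imports Complex_Main "HOL-Library.Poly_Mapping" "HOL-Library.FuncSet"
    "HOL-Computational_Algebra.Polynomial" "Jordan_Normal_Form.Determinant"
begin

text \<open>A point (lambda, x) of C x C^n is encoded as z :: nat => complex with
  z 0 = lambda and z i = x_i for 1 <= i <= n (coordinates > n are irrelevant and,
  for solution sets, required to be 0).  A square polynomial system of n+1 equations
  is encoded as F :: nat => (nat => complex) => complex, with components F 0, ..., F n.\<close>

text \<open>An m-th order n-dimensional tensor is a function on index maps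
  {1..m} -> {1..n}.  tensor_apply m n k A x j is the j-th entry of A^(k) x^(m-1).\<close>

definition tensor_apply ::
  "nat \<Rightarrow> nat \<Rightarrow> nat \<Rightarrow> ((nat \<Rightarrow> nat) \<Rightarrow> complex) \<Rightarrow> (nat \<Rightarrow> complex) \<Rightarrow> nat \<Rightarrow> complex" where
  "tensor_apply m n k A x j =
     (\<Sum>f \<in> {f \<in> {1..m} \<rightarrow>\<^sub>E {1..n}. f k = j}. A f * (\<Prod>r \<in> {1..m} - {k}. x (f r)))"

definition Qsys ::
  "nat \<Rightarrow> nat \<Rightarrow> (nat \<Rightarrow> complex) \<Rightarrow> (nat \<Rightarrow> complex) \<Rightarrow> (nat \<Rightarrow> complex) \<Rightarrow> complex
     \<Rightarrow> nat \<Rightarrow> (nat \<Rightarrow> complex) \<Rightarrow> complex" where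
  "Qsys n m mu beta c d r z =
     (if r = 0 then (\<Sum>i=1..n. c i * z i) + d
      else (z 0 - mu r) * (z r ^ (m - 1) - beta r))"

definition Gsys ::
  "nat \<Rightarrow> nat \<Rightarrow> ((nat \<Rightarrow> nat) \<Rightarrow> complex) \<Rightarrow> ((nat \<Rightarrow> nat) \<Rightarrow> complex) \<Rightarrow> nat
     \<Rightarrow> (nat \<Rightarrow> complex) \<Rightarrow> complex \<Rightarrow> nat \<Rightarrow> (nat \<Rightarrow> complex) \<Rightarrow> complex" where
  "Gsys n m A B k a b r z =
     (if r = 0 then (\<Sum>i=1..n. a i * z i) + b
      else tensor_apply m n k A z r - z 0 * tensor_apply m n 1 B z r)"

definition solution_set :: "nat \<Rightarrow> (nat \<Rightarrow> (nat \<Rightarrow> complex) \<Rightarrow> complex) \<Rightarrow> (nat \<Rightarrow> complex) set" where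
  "solution_set n F = {z. (\<forall>i>n. z i = 0) \<and> (\<forall>r\<le>n. F r z = 0)}"

definition cderiv :: "(complex \<Rightarrow> complex) \<Rightarrow> complex \<Rightarrow> complex" where
  "cderiv f x = (SOME D. (f has_field_derivative D) (at x))"

definition jacobian :: "nat \<Rightarrow> (nat \<Rightarrow> (nat \<Rightarrow> complex) \<Rightarrow> complex) \<Rightarrow> (nat \<Rightarrow> complex) \<Rightarrow> complex mat" where
  "jacobian n F z = mat (n+1) (n+1) (\<lambda>(r, s). cderiv (\<lambda>t. F r (z(s := t))) (z s))"

section \<open>Genericity: complement of the zero set of a nonzero polynomial\<close>

inductive polyfun :: "(('v \<Rightarrow> complex) \<Rightarrow> complex) \<Rightarrow> bool" where
  const: "polyfun (\<lambda>p. a)"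
| var: "polyfun (\<lambda>p. p v)"
| add: "polyfun f \<Longrightarrow> polyfun g \<Longrightarrow> polyfun (\<lambda>p. f p + g p)"
| mult: "polyfun f \<Longrightarrow> polyfun g \<Longrightarrow> polyfun (\<lambda>p. f p * g p)"

datatype param = Mu nat | Beta nat | Cf nat | Dc

definition params :: "(nat \<Rightarrow> complex) \<Rightarrow> (nat \<Rightarrow> complex) \<Rightarrow> (nat \<Rightarrow> complex) \<Rightarrow> complex \<Rightarrow> param \<Rightarrow> complex" where
  "params mu beta c d v = (case v of Mu i \<Rightarrow> mu i | Beta i \<Rightarrow> beta i | Cf i \<Rightarrow> c i | Dc \<Rightarrow> d)"

definition scale_group :: "nat set \<Rightarrow> complex \<Rightarrow> (nat \<Rightarrow> complex) \<Rightarrow> nat \<Rightarrow> complex" where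
  "scale_group S t z = (\<lambda>i. if i \<in> S then t * z i else z i)"

definition group_degree :: "nat set \<Rightarrow> ((nat \<Rightarrow> complex) \<Rightarrow> complex) \<Rightarrow> nat" where
  "group_degree S f = (LEAST D. \<forall>z. \<exists>q :: complex poly.
       Polynomial.degree q \<le> D \<and> (\<forall>t. f (scale_group S t z) = poly q t))"

text \<open>Coefficient of alpha_0^(l 0) ... alpha_(K-1)^(l (K-1)) in
  prod_(i<N) (d i 0 alpha_0 + ... + d i (K-1) alpha_(K-1)), polynomials being
  represented as finitely supported maps from exponent vectors to coefficients.\<close>
definition mh_bezout_number :: "nat \<Rightarrow> nat \<Rightarrow> (nat \<Rightarrow> nat) \<Rightarrow> (nat \<Rightarrow> nat \<Rightarrow> nat) \<Rightarrow> nat" where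
  "mh_bezout_number N K l d =
     Poly_Mapping.lookup (\<Prod>i<N. \<Sum>j<K. Poly_Mapping.single (Poly_Mapping.single j 1) (d i j))
            (\<Sum>j<K. Poly_Mapping.single j (l j))"

definition system_bezout_number ::
  "nat \<Rightarrow> (nat \<Rightarrow> (nat \<Rightarrow> complex) \<Rightarrow> complex) \<Rightarrow> nat set list \<Rightarrow> nat" where
  "system_bezout_number N F Y =
     mh_bezout_number N (length Y) (\<lambda>j. card (Y ! j)) (\<lambda>i j. group_degree (Y ! j) (F i))"

end

theory Submission
  imports Defs
begin

(* If lambda
   differed from all mu_j, each x_r would be an (m-1)-th root of beta_r and x would be a point of
   this finite grid of roots on the hyperplane c . x + d = 0.  Generically this cannot happen: the
   determinant of d + sum_r c_r Y_r, with Y_r multiplication by y_r on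
   C[y] / (y_1^(m-1) - beta_1, ..., y_n^(m-1) - beta_n), is a nonzero polynomial in the parameters,
   and a grid point on the hyperplane gives it the kernel vector of monomials (y^a)_a.  Hence
   lambda = mu_j for exactly one j; the x_r with r <> j range over the (m-1)-th roots of beta_r and
   x_j is then fixed by the linear equation, which gives n (m-1)^(n-1) solutions.  At each of them,
   exchanging the columns of lambda and x_j turns the Jacobian into an upper triangular matrix
   with nonzero diagonal.

   Q and G both consist of one equation of bidegree (0, 1) in (lambda, x) and n equations of
   bidegree (1, m-1), so their Bezout number is the coefficient of a_0 a_1^n in
   a_1 (a_0 + (m-1) a_1)^n, which is n (m-1)^(n-1). *)

section \<open>Bezout numbers for the partition {lambda}, {x}\<close>

lemma single_power:
  "Poly_Mapping.single (k::'a::comm_monoid_add) (a::'b::comm_semiring_1) ^ j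
     = Poly_Mapping.single (\<Sum>i<j. k) (a ^ j)"
  by (induction j) (auto simp: mult_single add.commute)

lemma lookup_bezout_product_two_groups:
  fixes n N :: nat
  assumes "n \<ge> 1"
  defines "x0 \<equiv> Poly_Mapping.single (Poly_Mapping.single (0::nat) (1::nat)) (1::nat)"
    and "x1 \<equiv> \<lambda>c. Poly_Mapping.single (Poly_Mapping.single (1::nat) (1::nat)) c"
  shows "Poly_Mapping.lookup (x1 1 * (x0 + x1 N) ^ n)
           (Poly_Mapping.single 0 1 + Poly_Mapping.single 1 n) = n * N ^ (n - 1)"
proof -
  define e where "e k = Poly_Mapping.single (1::nat) 1 + (Poly_Mapping.single 0 k + Poly_Mapping.single 1 (n - k))"
    for k :: nat
  have e_eq_iff: "e k = Poly_Mapping.single 0 1 + Poly_Mapping.single 1 n \<longleftrightarrow> k = 1" if "k \<le> n" for k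
  proof
    assume "e k = Poly_Mapping.single 0 1 + Poly_Mapping.single 1 n"
    then have "Poly_Mapping.lookup (e k) 0 = 1" by (simp add: lookup_add lookup_single)
    then show "k = 1" by (simp add: e_def lookup_add lookup_single)
  qed (use assms in \<open>simp add: e_def add_ac flip: single_add\<close>)
  have "x1 1 * (x0 + x1 N) ^ n = x1 1 * (\<Sum>k\<le>n. of_nat (n choose k) * x0 ^ k * x1 N ^ (n - k))"
    by (simp add: binomial_ring)
  also have "\<dots> = (\<Sum>k\<le>n. Poly_Mapping.single (e k) ((n choose k) * N ^ (n - k)))"
    by (simp add: sum_distrib_left x0_def x1_def e_def single_power mult_single flip: single_of_nat)
  finally have "Poly_Mapping.lookup (x1 1 * (x0 + x1 N) ^ n) (Poly_Mapping.single 0 1 + Poly_Mapping.single 1 n)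
      = (\<Sum>k\<le>n. if e k = Poly_Mapping.single 0 1 + Poly_Mapping.single 1 n then (n choose k) * N ^ (n - k) else 0)"
    by (simp add: lookup_sum lookup_single when_def)
  also have "\<dots> = (\<Sum>k\<le>n. if k = 1 then (n choose k) * N ^ (n - k) else 0)"
    by (intro sum.cong refl) (simp only: atMost_iff e_eq_iff)
  also have "\<dots> = n * N ^ (n - 1)" using assms by (simp add: sum.delta)
  finally show ?thesis .
qed

lemma system_bezout_number_two_groups:
  fixes F :: "nat \<Rightarrow> (nat \<Rightarrow> complex) \<Rightarrow> complex"
  assumes "n \<ge> 1"
    and "group_degree {0} (F 0) = 0" and "group_degree {1..n} (F 0) = 1"
    and "\<And>i. i \<in> {1..n} \<Longrightarrow> group_degree {0} (F i) = 1"
    and "\<And>i. i \<in> {1..n} \<Longrightarrow> group_degree {1..n} (F i) = N"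
  shows "system_bezout_number (n + 1) F [{0}, {1..n}] = n * N ^ (n - 1)"
proof -
  define x0 where "x0 = Poly_Mapping.single (Poly_Mapping.single (0::nat) (1::nat)) (1::nat)"
  define x1 where "x1 (c::nat) = Poly_Mapping.single (Poly_Mapping.single (1::nat) (1::nat)) c" for c
  let ?Y = "[{0::nat}, {1..n}]"
  have two: "{..<length ?Y} = {0, 1}" by auto
  have degrees: "(\<Prod>i<n + 1. \<Sum>j<length ?Y. Poly_Mapping.single (Poly_Mapping.single j 1)
      (group_degree (?Y ! j) (F i))) = x1 1 * (x0 + x1 N) ^ n"
    unfolding Suc_eq_plus1[symmetric] prod.lessThan_Suc_shift
    using assms by (simp add: two x0_def x1_def)
  have sizes: "(\<Sum>j<length ?Y. Poly_Mapping.single j (card (?Y ! j)))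
      = Poly_Mapping.single 0 1 + Poly_Mapping.single 1 n"
    by (simp add: two)
  show ?thesis
    unfolding system_bezout_number_def mh_bezout_number_def degrees sizes
    using lookup_bezout_product_two_groups[OF assms(1), of N] by (simp only: x0_def x1_def)
qed

lemma group_degree_eq_0I:
  assumes "\<And>t z. f (scale_group S t z) = f z"
  shows "group_degree S f = 0"
  unfolding group_degree_def
  by (rule Least_equality) (use assms in \<open>auto intro!: exI[of _ "[:f _:]"]\<close>)

lemma group_degree_affine:
  assumes "D > 0" and scale: "\<And>t z. f (scale_group S t z) = t ^ D * g z + h z"
    and "g z0 \<noteq> 0"
  shows "group_degree S f = D"
  unfolding group_degree_def
proof (rule Least_equality)
  have "f (scale_group S t z) = poly (monom (g z) D + [:h z:]) t" for t z
    by (simp add: scale poly_monom)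
  moreover have "degree (monom (g z) D + [:h z:]) \<le> D" for z
    by (intro degree_add_le) (simp_all add: degree_monom_le)
  ultimately show "\<forall>z. \<exists>q. degree q \<le> D \<and> (\<forall>t. f (scale_group S t z) = poly q t)"
    by blast
  fix D' assume "\<forall>z. \<exists>q. degree q \<le> D' \<and> (\<forall>t. f (scale_group S t z) = poly q t)"
  then obtain q where "degree q \<le> D'" and q: "\<forall>t. f (scale_group S t z0) = poly q t"
    by blast
  have "poly (monom (g z0) D + [:h z0:]) = poly q"
    using q scale by (auto simp: poly_monom fun_eq_iff mult.commute)
  then have "q = monom (g z0) D + [:h z0:]" by (simp add: poly_eq_poly_eq_iff)
  then have "coeff q D \<noteq> 0" using assms by (simp add: coeff_pCons split: nat.split)
  then show "D \<le> D'" using le_degree \<open>degree q \<le> D'\<close> by fastforce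
qed

lemma tensor_apply_cong:
  assumes "\<And>i. i \<in> {1..n} \<Longrightarrow> z i = z' i"
  shows "tensor_apply m n k A z j = tensor_apply m n k A z' j"
  unfolding tensor_apply_def
  by (intro sum.cong refl arg_cong2[where f=times] prod.cong) (auto simp: PiE_iff intro!: assms)

lemma tensor_apply_scale:
  assumes "k \<in> {1..m}"
  shows "tensor_apply m n k A (scale_group {1..n} t z) j = t ^ (m - 1) * tensor_apply m n k A z j"
proof -
  have "tensor_apply m n k A (scale_group {1..n} t z) j =
      (\<Sum>f \<in> {f \<in> {1..m} \<rightarrow>\<^sub>E {1..n}. f k = j}. A f * (\<Prod>r \<in> {1..m} - {k}. t * z (f r)))"
    unfolding tensor_apply_def scale_group_def by (intro sum.cong refl arg_cong2[where f=times] prod.cong) auto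
  also have "\<dots> = t ^ (m - 1) * tensor_apply m n k A z j"
    using assms by (simp add: tensor_apply_def prod.distrib sum_distrib_left mult_ac)
  finally show ?thesis .
qed

lemma lambda_degree_linear_form:
  "group_degree {0} (\<lambda>z. (\<Sum>i=1..n. a i * z i) + (b::complex)) = 0"
  by (rule group_degree_eq_0I) (simp add: scale_group_def)

lemma x_degree_linear_form:
  assumes "i0 \<in> {1..n}" and "a i0 \<noteq> 0"
  shows "group_degree {1..n} (\<lambda>z. (\<Sum>i=1..n. a i * z i) + (b::complex)) = 1"
proof (rule group_degree_affine)
  show "(\<Sum>i=1..n. a i * scale_group {1..n} t z i) + b = t ^ 1 * (\<Sum>i=1..n. a i * z i) + b" for t z
    by (simp add: scale_group_def sum_distrib_left mult_ac)
  show "(\<Sum>i=1..n. a i * (\<lambda>i. if i = i0 then 1 else 0) i) \<noteq> 0"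
    using assms by (simp add: if_distrib[where f="times _"] cong: if_cong)
qed simp

lemma lambda_degree_Qsys:
  assumes "r \<in> {1..n}" and "m \<ge> 2" and "beta r \<noteq> 0"
  shows "group_degree {0} (Qsys n m mu beta c d r) = 1"
proof (rule group_degree_affine)
  show "Qsys n m mu beta c d r (scale_group {0} t z) =
      t ^ 1 * (z 0 * (z r ^ (m - 1) - beta r)) + - mu r * (z r ^ (m - 1) - beta r)" for t z
    using assms by (simp add: Qsys_def scale_group_def algebra_simps)
  show "(\<lambda>i. if i = 0 then 1 else 0) 0 * ((\<lambda>i. if i = 0 then 1 else 0) r ^ (m - 1) - beta r) \<noteq> 0"
    using assms by (simp add: power_0_left)
qed simp

lemma x_degree_Qsys:
  assumes "r \<in> {1..n}" and "m \<ge> 2"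
  shows "group_degree {1..n} (Qsys n m mu beta c d r) = m - 1"
proof (rule group_degree_affine)
  show "Qsys n m mu beta c d r (scale_group {1..n} t z) =
      t ^ (m - 1) * ((z 0 - mu r) * z r ^ (m - 1)) + - (z 0 - mu r) * beta r" for t z
    using assms by (simp add: Qsys_def scale_group_def algebra_simps power_mult_distrib)
  show "((\<lambda>i. if i = 0 then mu r + 1 else 1) 0 - mu r) * (\<lambda>i. if i = 0 then mu r + 1 else 1) r ^ (m - 1) \<noteq> 0"
    using assms by simp
qed (use assms in simp)

lemma lambda_degree_Gsys:
  assumes "r \<in> {1..n}" and "tensor_apply m n 1 B x r \<noteq> 0"
  shows "group_degree {0} (Gsys n m A B k a b r) = 1"
proof (rule group_degree_affine)
  have "tensor_apply m n j C (scale_group {0} t z) r = tensor_apply m n j C z r" for j C t z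
    by (rule tensor_apply_cong) (simp add: scale_group_def)
  then show "Gsys n m A B k a b r (scale_group {0} t z) =
      t ^ 1 * (- z 0 * tensor_apply m n 1 B z r) + tensor_apply m n k A z r" for t z
    using assms by (simp add: Gsys_def scale_group_def)
  have "tensor_apply m n 1 B (x(0 := 1)) r = tensor_apply m n 1 B x r"
    by (rule tensor_apply_cong) simp
  then show "- (x(0 := 1)) 0 * tensor_apply m n 1 B (x(0 := 1)) r \<noteq> 0"
    using assms by simp
qed simp

lemma x_degree_Gsys:
  assumes "r \<in> {1..n}" and "tensor_apply m n 1 B x r \<noteq> 0" and "k \<in> {1..m}" and "m \<ge> 2"
  shows "group_degree {1..n} (Gsys n m A B k a b r) = m - 1"
proof (rule group_degree_affine)
  have "scale_group {1..n} t z 0 = z 0" for t z by (simp add: scale_group_def)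
  then show "Gsys n m A B k a b r (scale_group {1..n} t z) = t ^ (m - 1) * Gsys n m A B k a b r z + 0" for t z
    using assms tensor_apply_scale[OF assms(3)] tensor_apply_scale[of 1 m]
    by (simp add: Gsys_def algebra_simps)
  define x' where "x' = x(0 := (tensor_apply m n k A x r - 1) / tensor_apply m n 1 B x r)"
  have "tensor_apply m n j C x' r = tensor_apply m n j C x r" for j C
    unfolding x'_def by (rule tensor_apply_cong) simp
  then show "Gsys n m A B k a b r x' \<noteq> 0"
    using assms by (simp add: Gsys_def x'_def)
qed (use assms in simp)

lemma bezout_number_Qsys:
  assumes "n \<ge> 1" and "m \<ge> 2" and "\<forall>i\<in>{1..n}. beta i \<noteq> 0 \<and> c i \<noteq> 0"
  shows "system_bezout_number (n + 1) (Qsys n m mu beta c d) [{0}, {1..n}] = n * (m - 1) ^ (n - 1)"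
proof (rule system_bezout_number_two_groups)
  have linear: "Qsys n m mu beta c d 0 = (\<lambda>z. (\<Sum>i=1..n. c i * z i) + d)"
    by (simp add: Qsys_def fun_eq_iff)
  show "group_degree {0} (Qsys n m mu beta c d 0) = 0"
    unfolding linear by (rule lambda_degree_linear_form)
  show "group_degree {1..n} (Qsys n m mu beta c d 0) = 1"
    unfolding linear using assms by (intro x_degree_linear_form[of 1]) auto
qed (use assms lambda_degree_Qsys x_degree_Qsys in auto)

lemma bezout_number_Gsys:
  assumes "n \<ge> 1" and "m \<ge> 2" and "k \<in> {1..m}" and "\<exists>i\<in>{1..n}. a i \<noteq> 0"
    and "\<forall>i\<in>{1..n}. \<exists>x. tensor_apply m n 1 B x i \<noteq> 0"
  shows "system_bezout_number (n + 1) (Gsys n m A B k a b) [{0}, {1..n}] = n * (m - 1) ^ (n - 1)"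
proof (rule system_bezout_number_two_groups)
  have linear: "Gsys n m A B k a b 0 = (\<lambda>z. (\<Sum>i=1..n. a i * z i) + b)"
    by (simp add: Gsys_def fun_eq_iff)
  show "group_degree {0} (Gsys n m A B k a b 0) = 0"
    unfolding linear by (rule lambda_degree_linear_form)
  show "group_degree {1..n} (Gsys n m A B k a b 0) = 1"
    unfolding linear using assms(4) x_degree_linear_form by blast
qed (use assms lambda_degree_Gsys x_degree_Gsys in fastforce)+

section \<open>A polynomial certifying genericity\<close>

lemma polyfun_sum:
  assumes "finite A" and "\<And>a. a \<in> A \<Longrightarrow> polyfun (f a)"
  shows "polyfun (\<lambda>p. \<Sum>a\<in>A. f a p)"
  using assms by (induction A rule: finite_induct) (auto intro: polyfun.intros)

lemma polyfun_prod:
  assumes "finite A" and "\<And>a. a \<in> A \<Longrightarrow> polyfun (f a)"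
  shows "polyfun (\<lambda>p. \<Prod>a\<in>A. f a p)"
  using assms by (induction A rule: finite_induct) (auto intro: polyfun.intros)

lemma polyfun_if: "polyfun f \<Longrightarrow> polyfun g \<Longrightarrow> polyfun (\<lambda>p. if C then f p else g p)"
  by (cases C) auto

lemma polyfun_det:
  assumes "\<And>i j. polyfun (\<lambda>p. E p i j)"
  shows "polyfun (\<lambda>p. det (mat K K (\<lambda>(i, j). E p i j)))"
proof -
  have "det (mat K K (\<lambda>(i, j). E p i j)) =
      (\<Sum>\<pi> \<in> {\<pi>. \<pi> permutes {0..<K}}. signof \<pi> * (\<Prod>i = 0..<K. E p i (\<pi> i)))" for p
    by (subst det_def'[of _ K]) (auto intro!: sum.cong prod.cong dest: permutes_in_image)
  then show ?thesis
    by (simp only:) (intro polyfun_sum polyfun_prod polyfun.mult polyfun.const assms finite_permutations; simp)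
qed

definition roots_off_hyperplane ::
    "nat \<Rightarrow> nat \<Rightarrow> (nat \<Rightarrow> complex) \<Rightarrow> (nat \<Rightarrow> complex) \<Rightarrow> complex \<Rightarrow> bool" where
  "roots_off_hyperplane n N beta c d \<longleftrightarrow>
     (\<forall>y. (\<forall>r\<in>{1..n}. y r ^ N = beta r) \<longrightarrow> (\<Sum>r=1..n. c r * y r) + d \<noteq> 0)"

(* root_shift N beta r is multiplication by y_r in the monomial basis y^a (all a_r < N) of a
   quotient ring in which y_r^N = beta; hyperplane_matrix is multiplication by d + sum_r c_r y_r,
   with the parameters read off p. *)

definition root_shift ::
    "nat \<Rightarrow> complex \<Rightarrow> nat \<Rightarrow> (nat \<Rightarrow> nat) \<Rightarrow> (nat \<Rightarrow> nat) \<Rightarrow> complex" where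
  "root_shift N beta r a b =
     (if a r + 1 < N then (if b = a(r := a r + 1) then 1 else 0)
      else if b = a(r := 0) then beta else 0)"

definition hyperplane_matrix ::
    "nat \<Rightarrow> nat \<Rightarrow> (param \<Rightarrow> complex) \<Rightarrow> (nat \<Rightarrow> nat) \<Rightarrow> (nat \<Rightarrow> nat) \<Rightarrow> complex" where
  "hyperplane_matrix n N p a b =
     (if a = b then p Dc else 0) + (\<Sum>r=1..n. p (Cf r) * root_shift N (p (Beta r)) r a b)"

lemma polyfun_hyperplane_matrix: "polyfun (\<lambda>p. hyperplane_matrix n N p a b)"
  unfolding hyperplane_matrix_def root_shift_def
  by (intro polyfun.intros polyfun_if polyfun_sum) auto

lemma sum_root_shift_monomials:
  fixes y :: "nat \<Rightarrow> complex"
  assumes a: "a \<in> {1..n} \<rightarrow>\<^sub>E {..<N}" and r: "r \<in> {1..n}" and root: "y r ^ N = beta"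
  shows "(\<Sum>b \<in> {1..n} \<rightarrow>\<^sub>E {..<N}. root_shift N beta r a b * (\<Prod>s=1..n. y s ^ b s))
       = y r * (\<Prod>s=1..n. y s ^ a s)"
proof -
  let ?I = "{1..n} \<rightarrow>\<^sub>E {..<N}"
  define mono where "mono b = (\<Prod>s=1..n. y s ^ b s)" for b :: "nat \<Rightarrow> nat"
  define rest where "rest = (\<Prod>s\<in>{1..n} - {r}. y s ^ a s)"
  have mono_upd: "mono (a(r := k)) = y r ^ k * rest" for k
    using r by (simp add: mono_def rest_def prod.remove)
  have mono_a: "mono a = y r ^ a r * rest"
    using mono_upd[of "a r"] by simp
  have "a r < N" using a r by auto
  show ?thesis
  proof (cases "a r + 1 < N")
    case True
    then have "a(r := a r + 1) \<in> ?I" using a r by (auto simp: PiE_iff extensional_def)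
    have "(\<Sum>b\<in>?I. root_shift N beta r a b * mono b) = (\<Sum>b\<in>?I. if b = a(r := a r + 1) then mono b else 0)"
      using True by (intro sum.cong) (simp_all add: root_shift_def)
    also have "\<dots> = mono (a(r := a r + 1))"
      using \<open>a(r := a r + 1) \<in> ?I\<close> by (simp add: sum.delta[OF finite_PiE] del: fun_upd_apply)
    also have "\<dots> = y r * mono a"
      unfolding mono_upd mono_a by simp
    finally show ?thesis unfolding mono_def .
  next
    case False
    with \<open>a r < N\<close> have "a r = N - 1" and "N \<ge> 1" by linarith+
    then have "a(r := 0) \<in> ?I" using a r by (auto simp: PiE_iff extensional_def)
    have "(\<Sum>b\<in>?I. root_shift N beta r a b * mono b) = (\<Sum>b\<in>?I. if b = a(r := 0) then beta * mono b else 0)"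
      using False by (intro sum.cong) (simp_all add: root_shift_def)
    also have "\<dots> = beta * mono (a(r := 0))"
      using \<open>a(r := 0) \<in> ?I\<close> by (simp add: sum.delta[OF finite_PiE] del: fun_upd_apply)
    also have "\<dots> = y r * mono a"
      unfolding mono_upd mono_a \<open>a r = N - 1\<close> using \<open>N \<ge> 1\<close> root
      by (simp flip: power_Suc)
    finally show ?thesis unfolding mono_def .
  qed
qed

lemma sum_hyperplane_matrix_monomials:
  fixes y :: "nat \<Rightarrow> complex"
  assumes a: "a \<in> {1..n} \<rightarrow>\<^sub>E {..<N}" and roots: "\<forall>r\<in>{1..n}. y r ^ N = beta r"
  shows "(\<Sum>b \<in> {1..n} \<rightarrow>\<^sub>E {..<N}.
            hyperplane_matrix n N (params mu beta c d) a b * (\<Prod>s=1..n. y s ^ b s))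
       = (d + (\<Sum>r=1..n. c r * y r)) * (\<Prod>s=1..n. y s ^ a s)"
proof -
  let ?I = "{1..n} \<rightarrow>\<^sub>E {..<N}"
  let ?mono = "\<lambda>b. \<Prod>s=1..n. y s ^ b s"
  have "hyperplane_matrix n N (params mu beta c d) a b * ?mono b
      = (if a = b then d * ?mono b else 0) + (\<Sum>r=1..n. c r * (root_shift N (beta r) r a b * ?mono b))"
    for b by (simp add: hyperplane_matrix_def params_def distrib_right sum_distrib_right mult.assoc)
  then have "(\<Sum>b\<in>?I. hyperplane_matrix n N (params mu beta c d) a b * ?mono b)
      = (\<Sum>b\<in>?I. if a = b then d * ?mono b else 0)
        + (\<Sum>r=1..n. c r * (\<Sum>b\<in>?I. root_shift N (beta r) r a b * ?mono b))"
    by (simp add: sum.distrib sum_distrib_left) (rule sum.swap)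
  also have "\<dots> = d * ?mono a + (\<Sum>r=1..n. c r * (y r * ?mono a))"
    using a roots sum_root_shift_monomials[OF a] by (simp add: finite_PiE)
  finally show ?thesis by (simp add: algebra_simps sum_distrib_right)
qed

lemma det_hyperplane_matrix_eq_0:
  fixes y :: "nat \<Rightarrow> complex"
  assumes e: "bij_betw e {0..<K} ({1..n} \<rightarrow>\<^sub>E {..<N})" and "N \<ge> 1"
    and roots: "\<forall>r\<in>{1..n}. y r ^ N = beta r" and on_hyperplane: "(\<Sum>r=1..n. c r * y r) + d = 0"
  shows "det (mat K K (\<lambda>(i, j). hyperplane_matrix n N (params mu beta c d) (e i) (e j))) = 0"
proof -
  let ?M = "mat K K (\<lambda>(i, j). hyperplane_matrix n N (params mu beta c d) (e i) (e j))"
  define v where "v = vec K (\<lambda>j. \<Prod>s=1..n. y s ^ e j s)"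
  have "(\<lambda>s\<in>{1..n}. 0) \<in> e ` {0..<K}"
    using bij_betw_imp_surj_on[OF e] \<open>N \<ge> 1\<close> by auto
  then obtain j0 where "j0 < K" and "e j0 = (\<lambda>s\<in>{1..n}. 0)"
    by auto
  then have "v $ j0 = 1" by (simp add: v_def)
  then have "v \<noteq> 0\<^sub>v K" using \<open>j0 < K\<close> by auto
  moreover have "?M *\<^sub>v v = 0\<^sub>v K"
  proof (rule eq_vecI)
    fix i assume "i < dim_vec (0\<^sub>v K)"
    then have "i < K" by simp
    then have "(?M *\<^sub>v v) $ i
        = (\<Sum>j<K. hyperplane_matrix n N (params mu beta c d) (e i) (e j) * (\<Prod>s=1..n. y s ^ e j s))"
      by (simp add: v_def scalar_prod_def atLeast0LessThan)
    also have "\<dots> = (\<Sum>b \<in> {1..n} \<rightarrow>\<^sub>E {..<N}.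
        hyperplane_matrix n N (params mu beta c d) (e i) b * (\<Prod>s=1..n. y s ^ b s))"
      using sum.reindex_bij_betw[OF e] by (simp add: atLeast0LessThan)
    also have "\<dots> = (d + (\<Sum>r=1..n. c r * y r)) * (\<Prod>s=1..n. y s ^ e i s)"
      using bij_betwE[OF e] \<open>i < K\<close> by (intro sum_hyperplane_matrix_monomials roots) auto
    also have "\<dots> = 0"
      using on_hyperplane by (simp add: add.commute)
    finally show "(?M *\<^sub>v v) $ i = 0\<^sub>v K $ i" using \<open>i < K\<close> by simp
  qed simp
  moreover have "v \<in> carrier_vec K" by (simp add: v_def)
  ultimately show ?thesis
    using det_0_iff_vec_prod_zero[of ?M K] by auto
qed

lemma generic_roots_off_hyperplane:
  assumes "N \<ge> 1"
  shows "\<exists>P. polyfun P \<and> (\<exists>v. P v \<noteq> 0) \<and>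
    (\<forall>mu beta c d. P (params mu beta c d) \<noteq> 0 \<longrightarrow> roots_off_hyperplane n N beta c d)"
proof -
  let ?I = "{1..n} \<rightarrow>\<^sub>E {..<N}"
  define K where "K = card ?I"
  obtain e where e: "bij_betw e {0..<K} ?I"
    using ex_bij_betw_nat_finite[of ?I] by (auto simp: K_def finite_PiE)
  define P where "P p = det (mat K K (\<lambda>(i, j). hyperplane_matrix n N p (e i) (e j)))" for p
  have "polyfun P"
    unfolding P_def by (intro polyfun_det polyfun_hyperplane_matrix)
  moreover have "P (\<lambda>v. if v = Dc then 1 else 0) \<noteq> 0"
  proof -
    have "hyperplane_matrix n N (\<lambda>v. if v = Dc then 1 else 0) a b = (if a = b then 1 else 0)" for a b
      by (simp add: hyperplane_matrix_def)
    then have "mat K K (\<lambda>(i, j). hyperplane_matrix n N (\<lambda>v. if v = Dc then 1 else 0) (e i) (e j)) = 1\<^sub>m K"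
      using bij_betw_imp_inj_on[OF e] by (intro eq_matI) (auto simp: inj_on_eq_iff)
    then show ?thesis by (simp add: P_def)
  qed
  moreover have "P (params mu beta c d) = 0"
    if "\<forall>r\<in>{1..n}. y r ^ N = beta r" and "(\<Sum>r=1..n. c r * y r) + d = 0" for mu beta c d y
    unfolding P_def using e assms that by (rule det_hyperplane_matrix_eq_0)
  ultimately show ?thesis
    unfolding roots_off_hyperplane_def by blast
qed

section \<open>The solutions of Q\<close>

lemma solution_set_Qsys_iff:
  "z \<in> solution_set n (Qsys n m mu beta c d) \<longleftrightarrow>
     (\<forall>i>n. z i = 0) \<and> (\<Sum>i=1..n. c i * z i) + d = 0 \<and>
     (\<forall>r\<in>{1..n}. (z 0 - mu r) * (z r ^ (m - 1) - beta r) = 0)"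
proof -
  have "(\<forall>r\<le>n. P r) \<longleftrightarrow> P 0 \<and> (\<forall>r\<in>{1..n}. P r)" for P :: "nat \<Rightarrow> bool"
    by (metis atLeastAtMost_iff le0 less_one linorder_not_le)
  then show ?thesis by (simp add: solution_set_def Qsys_def)
qed

lemma Qsys_solution_lambda_root:
  assumes "roots_off_hyperplane n (m - 1) beta c d" and "z \<in> solution_set n (Qsys n m mu beta c d)"
  shows "\<exists>j\<in>{1..n}. z 0 = mu j"
  using assms by (force simp: roots_off_hyperplane_def solution_set_Qsys_iff)

lemma Qsys_solution_other_coordinate:
  assumes "inj_on mu {1..n}" and "z \<in> solution_set n (Qsys n m mu beta c d)"
    and "j \<in> {1..n}" and "z 0 = mu j" and "r \<in> {1..n}" and "r \<noteq> j"
  shows "z r ^ (m - 1) = beta r"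
  using assms by (auto simp: solution_set_Qsys_iff inj_on_eq_iff)

lemma Qsys_solution_own_coordinate:
  assumes "roots_off_hyperplane n (m - 1) beta c d" and "inj_on mu {1..n}"
    and "z \<in> solution_set n (Qsys n m mu beta c d)" and "j \<in> {1..n}" and "z 0 = mu j"
  shows "z j ^ (m - 1) \<noteq> beta j"
proof
  assume "z j ^ (m - 1) = beta j"
  with assms Qsys_solution_other_coordinate have "\<forall>r\<in>{1..n}. z r ^ (m - 1) = beta r"
    by blast
  with assms(1,3) show False
    by (auto simp: roots_off_hyperplane_def solution_set_Qsys_iff)
qed

lemma bij_betw_Qsys_solutions_at_root:
  fixes mu beta c :: "nat \<Rightarrow> complex" and d :: complex
  assumes inj: "inj_on mu {1..n}" and j: "j \<in> {1..n}" and "c j \<noteq> 0"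
  shows "bij_betw (\<lambda>z. restrict z ({1..n} - {j}))
           {z \<in> solution_set n (Qsys n m mu beta c d). z 0 = mu j}
           (PiE ({1..n} - {j}) (\<lambda>r. {y. y ^ (m - 1) = beta r}))"
proof -
  let ?J = "{1..n} - {j}"
  let ?S = "{z \<in> solution_set n (Qsys n m mu beta c d). z 0 = mu j}"
  let ?R = "PiE ?J (\<lambda>r. {y. y ^ (m - 1) = beta r})"
  define lift where "lift y = (\<lambda>i. if i = 0 then mu j else if i \<in> ?J then y i
      else if i = j then - (d + (\<Sum>r\<in>?J. c r * y r)) / c j else 0)" for y :: "nat \<Rightarrow> complex"
  have split: "(\<Sum>i=1..n. c i * z i) = c j * z j + (\<Sum>r\<in>?J. c r * z r)" for z
    using j by (simp add: sum.remove)
  show ?thesis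
  proof (rule bij_betw_byWitness[where f' = lift])
    show "\<forall>z\<in>?S. lift (restrict z ?J) = z"
    proof
      fix z assume "z \<in> ?S"
      then have "c j * z j + (\<Sum>r\<in>?J. c r * z r) + d = 0" and "\<forall>i>n. z i = 0" and "z 0 = mu j"
        unfolding solution_set_Qsys_iff split by auto
      moreover from this(1) have "z j = - (d + (\<Sum>r\<in>?J. c r * z r)) / c j"
        using \<open>c j \<noteq> 0\<close> by (simp add: eq_divide_eq eq_neg_iff_add_eq_0 algebra_simps)
      ultimately show "lift (restrict z ?J) = z"
        using j by (auto simp: lift_def fun_eq_iff not_le)
    qed
    show "\<forall>y\<in>?R. restrict (lift y) ?J = y"
      by (auto simp: lift_def PiE_iff fun_eq_iff extensional_def)
    show "(\<lambda>z. restrict z ?J) ` ?S \<subseteq> ?R"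
    proof (rule image_subsetI)
      fix z assume "z \<in> ?S"
      then show "restrict z ?J \<in> ?R"
        unfolding restrict_PiE_iff
        using Qsys_solution_other_coordinate[OF inj, of z m beta c d j] j by auto
    qed
    show "lift ` ?R \<subseteq> ?S"
    proof (rule image_subsetI)
      fix y assume "y \<in> ?R"
      have on_J: "lift y r = y r" "y r ^ (m - 1) = beta r" if "r \<in> ?J" for r
        using that PiE_mem[OF \<open>y \<in> ?R\<close> that] by (auto simp: lift_def)
      have "(\<Sum>r\<in>?J. c r * lift y r) = (\<Sum>r\<in>?J. c r * y r)"
        using on_J by simp
      moreover have "c j * lift y j = - (d + (\<Sum>r\<in>?J. c r * y r))"
        using \<open>c j \<noteq> 0\<close> j by (simp add: lift_def)
      ultimately have "(\<Sum>i=1..n. c i * lift y i) + d = 0"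
        unfolding split by simp
      moreover have "(lift y 0 - mu r) * (lift y r ^ (m - 1) - beta r) = 0" if "r \<in> {1..n}" for r
        using on_J[of r] that by (cases "r = j") (simp_all add: lift_def)
      moreover have "lift y i = 0" if "i > n" for i
        using that j by (simp add: lift_def)
      ultimately show "lift y \<in> ?S"
        by (simp add: solution_set_Qsys_iff lift_def)
    qed
  qed
qed

lemma card_Qsys_solutions_at_root:
  fixes mu beta c :: "nat \<Rightarrow> complex" and d :: complex
  assumes "inj_on mu {1..n}" and j: "j \<in> {1..n}" and "m \<ge> 2"
    and nonzero: "\<forall>i\<in>{1..n}. beta i \<noteq> 0 \<and> c i \<noteq> 0"
  shows "finite {z \<in> solution_set n (Qsys n m mu beta c d). z 0 = mu j} \<and>
    card {z \<in> solution_set n (Qsys n m mu beta c d). z 0 = mu j} = (m - 1) ^ (n - 1)"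
proof -
  let ?R = "PiE ({1..n} - {j}) (\<lambda>r. {y. y ^ (m - 1) = beta r})"
  have "finite ?R"
    using \<open>m \<ge> 2\<close> by (simp add: finite_PiE finite_nth_roots)
  have "card ?R = (\<Prod>r\<in>{1..n} - {j}. card {y. y ^ (m - 1) = beta r})"
    by (simp add: card_PiE)
  also have "\<dots> = (m - 1) ^ (n - 1)"
    using nonzero \<open>m \<ge> 2\<close> j by (simp add: card_nth_roots)
  finally have "card ?R = (m - 1) ^ (n - 1)" .
  moreover have bij: "bij_betw (\<lambda>z. restrict z ({1..n} - {j}))
      {z \<in> solution_set n (Qsys n m mu beta c d). z 0 = mu j} ?R"
    using nonzero j by (intro bij_betw_Qsys_solutions_at_root assms(1)) auto
  ultimately show ?thesis
    using bij_betw_finite[OF bij] bij_betw_same_card[OF bij] \<open>finite ?R\<close> by simp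
qed

lemma card_solution_set_Qsys:
  assumes "roots_off_hyperplane n (m - 1) beta c d" and "inj_on mu {1..n}" and "m \<ge> 2"
    and "\<forall>i\<in>{1..n}. beta i \<noteq> 0 \<and> c i \<noteq> 0"
  shows "finite (solution_set n (Qsys n m mu beta c d)) \<and>
    card (solution_set n (Qsys n m mu beta c d)) = n * (m - 1) ^ (n - 1)"
proof -
  define S where "S j = {z \<in> solution_set n (Qsys n m mu beta c d). z 0 = mu j}" for j
  have "solution_set n (Qsys n m mu beta c d) = (\<Union>j\<in>{1..n}. S j)"
    using Qsys_solution_lambda_root[OF assms(1)] by (auto simp: S_def)
  moreover have "finite (S j) \<and> card (S j) = (m - 1) ^ (n - 1)" if "j \<in> {1..n}" for j
    unfolding S_def using card_Qsys_solutions_at_root that assms(2-4) by blast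
  moreover have "S i \<inter> S j = {}" if "i \<in> {1..n}" "j \<in> {1..n}" "i \<noteq> j" for i j
    using that assms(2) by (auto simp: S_def inj_on_eq_iff)
  ultimately show ?thesis
    by (simp add: card_UN_disjoint)
qed

section \<open>Nonsingularity of the Jacobian\<close>

lemma det_column_permuted_upper_triangular:
  fixes f :: "nat \<Rightarrow> nat \<Rightarrow> 'a :: comm_ring_1"
  assumes p: "p permutes {0..<n}" and upper: "\<And>i j. i < j \<Longrightarrow> j < n \<Longrightarrow> f j (p i) = 0"
  shows "det (mat n n (\<lambda>(i, j). f i j)) = signof p * (\<Prod>i<n. f i (p i))"
proof -
  let ?A = "mat n n (\<lambda>(i, j). f i j)"
  let ?B = "mat n n (\<lambda>(i, j). transpose_mat ?A $$ (p i, j))"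
  have "?B = mat n n (\<lambda>(i, j). f j (p i))"
    using permutes_in_image[OF p] by (intro eq_matI) auto
  then have "det ?B = (\<Prod>i<n. f i (p i))"
    using upper by (subst det_lower_triangular[of n]) (auto simp: prod_list_diag_prod atLeast0LessThan)
  moreover have "det ?B = signof p * det ?A"
    using det_permute_rows[OF _ p, of "transpose_mat ?A"] det_transpose[of ?A n] by simp
  ultimately have "signof p * det ?A = (\<Prod>i<n. f i (p i))" by simp
  then have "signof p * (signof p * det ?A) = signof p * (\<Prod>i<n. f i (p i))" by simp
  then show ?thesis by (simp flip: mult.assoc of_int_mult)
qed

lemma cderiv_eqI: "(f has_field_derivative D) (at x) \<Longrightarrow> cderiv f x = D"
  unfolding cderiv_def by (rule some_equality) (auto intro: DERIV_unique)

lemma has_field_derivative_fun_upd: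
  "((\<lambda>t. (z(s := t)) i) has_field_derivative (if i = s then 1 else 0)) (at x)"
  by (cases "i = s") auto

lemma cderiv_Qsys_linear:
  "cderiv (\<lambda>t. Qsys n m mu beta c d 0 (z(s := t))) (z s) = (if s \<in> {1..n} then c s else 0)"
proof -
  have "((\<lambda>t. (\<Sum>i=1..n. c i * (z(s := t)) i) + d) has_field_derivative
      (\<Sum>i=1..n. c i * (if i = s then 1 else 0)) + 0) (at (z s))"
    by (intro DERIV_add DERIV_sum DERIV_cmult has_field_derivative_fun_upd DERIV_const)
  then show ?thesis
    by (intro cderiv_eqI) (simp add: Qsys_def if_distrib[where f="times _"] cong: if_cong del: fun_upd_apply)
qed

lemma cderiv_Qsys:
  assumes "r \<noteq> 0"
  shows "cderiv (\<lambda>t. Qsys n m mu beta c d r (z(s := t))) (z s) =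
     (if s = 0 then z r ^ (m - 1) - beta r else 0) +
     (if s = r then (z 0 - mu r) * (of_nat (m - 1) * z r ^ (m - 2)) else 0)"
proof -
  have "((\<lambda>t. Qsys n m mu beta c d r (z(s := t))) has_field_derivative
      (if 0 = s then 1 else 0) * ((z(s := z s)) r ^ (m - 1) - beta r) +
      ((z(s := z s)) 0 - mu r) *
        (of_nat (m - 1) * (z(s := z s)) r ^ (m - 1 - 1) * (if r = s then 1 else 0))) (at (z s))"
    unfolding Qsys_def using assms
    by (auto intro!: derivative_eq_intros has_field_derivative_fun_upd simp del: fun_upd_apply)
  then show ?thesis
    by (intro cderiv_eqI) (auto simp: eq_commute[of 0 s] numeral_2_eq_2)
qed

lemma jacobian_Qsys_nonsingular:
  assumes off: "roots_off_hyperplane n (m - 1) beta c d" and inj: "inj_on mu {1..n}" and "m \<ge> 2"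
    and nonzero: "\<forall>i\<in>{1..n}. beta i \<noteq> 0 \<and> c i \<noteq> 0"
    and z: "z \<in> solution_set n (Qsys n m mu beta c d)"
  shows "det (jacobian n (Qsys n m mu beta c d) z) \<noteq> 0"
proof -
  obtain j where j: "j \<in> {1..n}" and "z 0 = mu j"
    using Qsys_solution_lambda_root[OF off z] by blast
  let ?J = "\<lambda>r s. cderiv (\<lambda>t. Qsys n m mu beta c d r (z(s := t))) (z s)"
  have other: "z r ^ (m - 1) = beta r" if "r \<in> {1..n}" "r \<noteq> j" for r
    using Qsys_solution_other_coordinate[OF inj z j \<open>z 0 = mu j\<close>] that by blast
  (* Exchanging the columns 0 and j makes the Jacobian upper triangular. *)
  define \<tau> where "\<tau> = Transposition.transpose 0 j"
  have "\<tau> permutes {0..<n + 1}"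
    unfolding \<tau>_def using j by (intro permutes_swap_id) auto
  moreover have "?J s (\<tau> i) = 0" if "i < s" "s < n + 1" for i s
    using that other \<open>z 0 = mu j\<close> j
    by (auto simp: cderiv_Qsys \<tau>_def transpose_def)
  ultimately have "det (jacobian n (Qsys n m mu beta c d) z) = signof \<tau> * (\<Prod>i<n + 1. ?J i (\<tau> i))"
    unfolding jacobian_def by (rule det_column_permuted_upper_triangular)
  moreover have "?J i (\<tau> i) \<noteq> 0" if "i < n + 1" for i
  proof -
    consider "i = 0" | "i = j" | "i \<in> {1..n}" "i \<noteq> j"
      using \<open>i < n + 1\<close> by fastforce
    then show ?thesis
    proof cases
      case 1
      then show ?thesis using j nonzero by (simp add: \<tau>_def cderiv_Qsys_linear)
    next
      case 2
      then show ?thesis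
        using Qsys_solution_own_coordinate[OF off inj z j \<open>z 0 = mu j\<close>] j
        by (simp add: \<tau>_def cderiv_Qsys)
    next
      case 3
      then have "z i \<noteq> 0" and "mu j \<noteq> mu i"
        using other[of i] nonzero \<open>m \<ge> 2\<close> j inj by (auto simp: inj_on_eq_iff power_0_left)
      then show ?thesis
        using 3 \<open>m \<ge> 2\<close> \<open>z 0 = mu j\<close> by (simp add: \<tau>_def transpose_def cderiv_Qsys)
    qed
  qed
  ultimately show ?thesis
    by (simp add: sign_def)
qed

theorem mainTheorem5:
  fixes n m :: nat
  assumes "n \<ge> 1" and "m \<ge> 2"
  shows
   "(\<exists>P :: (param \<Rightarrow> complex) \<Rightarrow> complex. polyfun P \<and> (\<exists>v. P v \<noteq> 0) \<and>
      (\<forall>mu beta c :: nat \<Rightarrow> complex. \<forall>d :: complex.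
         (\<forall>i\<in>{1..n}. mu i \<noteq> 0 \<and> beta i \<noteq> 0 \<and> c i \<noteq> 0) \<and> d \<noteq> 0 \<and>
         inj_on mu {1..n} \<and> P (params mu beta c d) \<noteq> 0 \<longrightarrow>
           finite (solution_set n (Qsys n m mu beta c d)) \<and>
           card (solution_set n (Qsys n m mu beta c d)) = n * (m - 1) ^ (n - 1) \<and>
           (\<forall>z \<in> solution_set n (Qsys n m mu beta c d).
              det (jacobian n (Qsys n m mu beta c d) z) \<noteq> 0)))
    \<and> (\<forall>mu beta c :: nat \<Rightarrow> complex. \<forall>d :: complex.
         (\<forall>i\<in>{1..n}. mu i \<noteq> 0 \<and> beta i \<noteq> 0 \<and> c i \<noteq> 0) \<and> d \<noteq> 0 \<and> inj_on mu {1..n} \<longrightarrow>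
           system_bezout_number (n+1) (Qsys n m mu beta c d) [{0}, {1..n}] = n * (m - 1) ^ (n - 1))
    \<and> (\<forall>A B :: (nat \<Rightarrow> nat) \<Rightarrow> complex. \<forall>k. \<forall>a :: nat \<Rightarrow> complex. \<forall>b :: complex.
         1 \<le> k \<and> k \<le> m \<and>
         (\<exists>i\<in>{1..n}. a i \<noteq> 0) \<and>
         (\<forall>i\<in>{1..n}. \<exists>x. tensor_apply m n 1 B x i \<noteq> 0) \<longrightarrow>
           system_bezout_number (n+1) (Gsys n m A B k a b) [{0}, {1..n}] = n * (m - 1) ^ (n - 1))"
proof -
  have "m - 1 \<ge> 1" using assms(2) by simp
  then obtain P where "polyfun P" and "\<exists>v. P v \<noteq> 0"
    and off: "\<And>mu beta c d. P (params mu beta c d) \<noteq> 0 \<Longrightarrow> roots_off_hyperplane n (m - 1) beta c d"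
    using generic_roots_off_hyperplane by blast
  have "finite (solution_set n (Qsys n m mu beta c d)) \<and>
      card (solution_set n (Qsys n m mu beta c d)) = n * (m - 1) ^ (n - 1) \<and>
      (\<forall>z \<in> solution_set n (Qsys n m mu beta c d). det (jacobian n (Qsys n m mu beta c d) z) \<noteq> 0)"
    if "\<forall>i\<in>{1..n}. beta i \<noteq> 0 \<and> c i \<noteq> 0" and "inj_on mu {1..n}" and "P (params mu beta c d) \<noteq> 0"
    for mu beta c d
    using card_solution_set_Qsys[OF off that(2) assms(2) that(1)]
      jacobian_Qsys_nonsingular[OF off that(2) assms(2) that(1)] that(3) by blast
  then show ?thesis
    using \<open>polyfun P\<close> \<open>\<exists>v. P v \<noteq> 0\<close> bezout_number_Qsys[OF assms] bezout_number_Gsys[OF assms]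
    by (intro conjI exI[of _ P]) auto
qed

end
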